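(* Let $\lambda_1\ge0$ and $\lambda_2=0$, and let $P_n,k_n,c_n,Q_n,\widehat k_n,a_n,b_n$ be as in the context. Then for all $n\ge1$: (1) $\dfrac{c_{n+2}c_{n+1}}{a_{n+2}}+a_n=c_{n+1}+c_n$; (2) $a_{n+1}b_n=c_{n+1}c_n$; (3) $\displaystyle\lim_{n\to\infty}\frac{a_n}{\sqrt n}=\lim_{n\to\infty}\frac{b_n}{\sqrt n}=\frac{1}{2\sqrt3}$.
   Context: $P_n$ are the monic polynomials orthogonal with respect to $\langle f,g\rangle_F=\int_{\mathbb R}fg\,e^{-x^4}dx$, $k_n=\langle P_n,P_n\rangle_F$, and $c_n$ are defined by the three-term recurrence $xP_n(x)=P_{n+1}(x)+c_nP_{n-1}(x)$ ($n\ge1$), so $c_n=k_n/k_{n-1}$ and $c_0=0$. $Q_n$ are the monic polynomials orthogonal with respect to $\langle f,g\rangle_S=\int_{\mathbb R}fg\,e^{-x^4}dx+\lambda_1f(0)g(0)$, $\widehat k_n=\langle Q_n,Q_n\rangle_S$, and $a_n=k_n/\widehat k_{n-1}$, $b_n=\widehat k_n/k_{n-1}$ for $n\ge1$ (these are the coefficients in $xP_n=Q_{n+1}+a_nQ_{n-1}$ and $xQ_n=P_{n+1}+b_nP_{n-1}$). *)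

theory Defs
  imports "HOL-Analysis.Analysis" "HOL-Computational_Algebra.Polynomial"
begin

definition ipF :: "real poly \<Rightarrow> real poly \<Rightarrow> real" where
  "ipF f g = (\<integral>x. poly f x * poly g x * exp (- (x ^ 4)) \<partial>lborel)"

text \<open>Sobolev-type (here: discrete) inner product with a mass lambda1 at 0 (lambda2 = 0).\<close>
definition ipS :: "real \<Rightarrow> real poly \<Rightarrow> real poly \<Rightarrow> real" where
  "ipS l1 f g = ipF f g + l1 * poly f 0 * poly g 0"

definition monic_OP :: "(real poly \<Rightarrow> real poly \<Rightarrow> real) \<Rightarrow> nat \<Rightarrow> real poly" where
  "monic_OP ip n = (THE p. degree p = n \<and> lead_coeff p = 1 \<and>
                       (\<forall>q. degree q < n \<longrightarrow> ip p q = 0))"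

definition P :: "nat \<Rightarrow> real poly" where "P n = monic_OP ipF n"
definition kF :: "nat \<Rightarrow> real" where "kF n = ipF (P n) (P n)"
definition c :: "nat \<Rightarrow> real" where "c n = (if n = 0 then 0 else kF n / kF (n - 1))"

definition Q :: "real \<Rightarrow> nat \<Rightarrow> real poly" where "Q l1 n = monic_OP (ipS l1) n"
definition kS :: "real \<Rightarrow> nat \<Rightarrow> real" where "kS l1 n = ipS l1 (Q l1 n) (Q l1 n)"

definition a :: "real \<Rightarrow> nat \<Rightarrow> real" where "a l1 n = kF n / kS l1 (n - 1)"
definition b :: "real \<Rightarrow> nat \<Rightarrow> real" where "b l1 n = kS l1 n / kF (n - 1)"

end

theory Submission
  imports Defs "HOL-Probability.Distributions" "HOL-Real_Asymp.Real_Asymp"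
begin

text \<open>Both inner products are even, so \<open>P\<^sub>n\<close> and \<open>Q\<^sub>n\<close> have the parity of \<open>n\<close>. Since
  \<open>x P\<^sub>n\<close> vanishes at \<open>0\<close>, the mass at the origin does not see it, and
  \<open>x P\<^sub>n = Q\<^sub>n\<^sub>+\<^sub>1 + a\<^sub>n Q\<^sub>n\<^sub>-\<^sub>1\<close>. Computing the Freud norm of \<open>x P\<^sub>n\<close> in both bases gives
  \<open>kS (n+1) + a\<^sub>n\<^sup>2 kS (n-1) = kF (n+1) + c\<^sub>n\<^sup>2 kF (n-1)\<close>, from which (1) and (2) are algebra.

  Integration by parts against \<open>exp (-x\<^sup>4)\<close> yields the Freud equation
  \<open>n = 4 c\<^sub>n (c\<^sub>n\<^sub>-\<^sub>1 + c\<^sub>n + c\<^sub>n\<^sub>+\<^sub>1)\<close>. Along indices where \<open>c\<^sub>n / \<surd>n\<close> is close to its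
  limsup \<open>L\<close>, resp. its liminf \<open>l\<close>, this gives \<open>4L(L + 2l) \<le> 1 \<le> 4l(l + 2L)\<close>, hence
  \<open>L = l = 1/(2\<surd>3)\<close>. Finally \<open>\<delta>\<^sub>n = kS n / kF n - 1 \<ge> 0\<close> satisfies
  \<open>\<delta>\<^sub>n\<^sub>+\<^sub>1 = (c\<^sub>n / c\<^sub>n\<^sub>+\<^sub>1) \<delta>\<^sub>n\<^sub>-\<^sub>1 / (1 + \<delta>\<^sub>n\<^sub>-\<^sub>1)\<close> with \<open>c\<^sub>n / c\<^sub>n\<^sub>+\<^sub>1 \<longrightarrow> 1\<close>; this forces
  \<open>\<delta>\<^sub>n \<longrightarrow> 0\<close>, so \<open>a\<^sub>n\<close> and \<open>b\<^sub>n\<close> inherit the asymptotics of \<open>c\<^sub>n\<close>.\<close>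

definition mirror :: "real poly \<Rightarrow> real poly" where
  "mirror p = p \<circ>\<^sub>p [:0, -1:]"

lemma poly_mirror [simp]: "poly (mirror p) x = poly p (- x)"
  by (simp add: mirror_def poly_pcompose)

lemma mirror_mirror [simp]: "mirror (mirror p) = p"
  by (rule poly_ext) simp

lemma degree_mirror [simp]: "degree (mirror p) = degree p"
  by (simp add: mirror_def degree_pcompose)

lemma mirror_smult [simp]: "mirror (smult r p) = smult r (mirror p)"
  by (rule poly_ext) simp

lemma lead_coeff_mirror: "lead_coeff (mirror p) = (-1) ^ degree p * lead_coeff p"
  unfolding mirror_def by (subst lead_coeff_comp) auto

lemma mirror_x_mult:
  assumes "mirror g = smult s g"
  shows "mirror ([:0, 1:] * g) = smult (- s) ([:0, 1:] * g)"
proof (rule poly_ext)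
  fix x
  have "poly g (- x) = s * poly g x"
    using arg_cong[OF assms, of "\<lambda>p. poly p x"] by simp
  then show "poly (mirror ([:0, 1:] * g)) x = poly (smult (- s) ([:0, 1:] * g)) x"
    by simp
qed

section \<open>The Freud weight\<close>

lemma exp_neg_power4_le: "exp (- (x ^ 4)) \<le> exp (1/16) * exp (- ((x::real)\<^sup>2 / 2))"
proof -
  have "0 \<le> (x\<^sup>2 - 1/4)\<^sup>2" by simp
  then have "- (x ^ 4) \<le> 1/16 + - (x\<^sup>2 / 2)"
    by (simp add: power2_eq_square power4_eq_xxxx algebra_simps)
  then show ?thesis by (simp add: exp_add [symmetric])
qed

lemma integrable_power_mult_exp_neg_power4:
  "integrable lborel (\<lambda>x::real. x ^ k * exp (- (x ^ 4)))"
proof (rule Bochner_Integration.integrable_bound)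
  show "integrable lborel (\<lambda>x. exp (1/16) * sqrt (2*pi) * (normal_density 0 1 x * \<bar>x - 0\<bar> ^ k))"
    using integrable_normal_moment_abs[of 1 0 k] by (intro integrable_mult_right) simp
  show "AE x in lborel. norm (x ^ k * exp (- (x ^ 4)))
          \<le> norm (exp (1/16) * sqrt (2*pi) * (normal_density 0 1 x * \<bar>x - 0\<bar> ^ k))"
  proof (rule AE_I2)
    fix x :: real
    have "norm (x ^ k * exp (- (x ^ 4))) \<le> \<bar>x\<bar> ^ k * (exp (1/16) * exp (- (x\<^sup>2 / 2)))"
      by (simp add: abs_mult power_abs mult_left_mono[OF exp_neg_power4_le])
    also have "\<dots> = norm (exp (1/16) * sqrt (2*pi) * (normal_density 0 1 x * \<bar>x - 0\<bar> ^ k))"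
      by (simp add: normal_density_def)
    finally show "norm (x ^ k * exp (- (x ^ 4)))
          \<le> norm (exp (1/16) * sqrt (2*pi) * (normal_density 0 1 x * \<bar>x - 0\<bar> ^ k))" .
  qed
qed simp

lemma poly_mult_exp_neg_power4_eq_sum:
  "poly (p::real poly) x * exp (- (x ^ 4)) = (\<Sum>i\<le>degree p. coeff p i * (x ^ i * exp (- (x ^ 4))))"
  by (simp add: poly_altdef sum_distrib_right mult.assoc)

lemma integrable_poly_mult_exp_neg_power4:
  "integrable lborel (\<lambda>x. poly (p::real poly) x * exp (- (x ^ 4)))"
  unfolding poly_mult_exp_neg_power4_eq_sum
  by (intro Bochner_Integration.integrable_sum integrable_mult_right)
     (rule integrable_power_mult_exp_neg_power4)

lemma integrable_ipF_integrand [intro]: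
  "integrable lborel (\<lambda>x. poly (f::real poly) x * poly g x * exp (- (x ^ 4)))"
  using integrable_poly_mult_exp_neg_power4[of "f * g"] by simp

lemma measurable_ipF_integrand [measurable]:
  "(\<lambda>x. poly (f::real poly) x * poly g x * exp (- (x ^ 4))) \<in> borel_measurable borel"
  by (intro borel_measurable_continuous_onI continuous_intros)

lemma power_mult_exp_neg_power4_tendsto_0:
  "((\<lambda>x::real. x ^ k * exp (- (x ^ 4))) \<longlongrightarrow> 0) at_top"
proof (rule tendsto_0_le[OF tendsto_power_div_exp_0[of k], where K = 1])
  show "\<forall>\<^sub>F x::real in at_top. norm (x ^ k * exp (- (x ^ 4))) \<le> norm (x ^ k / exp x) * 1"
  proof (rule eventually_mono[OF eventually_ge_at_top[of "1::real"]])
    fix x :: real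
    assume "1 \<le> x"
    then have "x * 1 \<le> x * x ^ 3"
      by (intro mult_left_mono) (auto simp: one_le_power)
    then have "exp (- (x ^ 4)) \<le> exp (- x)"
      by (simp add: power_numeral_reduce)
    with \<open>1 \<le> x\<close> show "norm (x ^ k * exp (- (x ^ 4))) \<le> norm (x ^ k / exp x) * 1"
      by (simp add: exp_minus divide_inverse mult_left_mono)
  qed
qed

lemma poly_mult_exp_neg_power4_tendsto_0_at_top:
  "((\<lambda>x::real. poly (p::real poly) x * exp (- (x ^ 4))) \<longlongrightarrow> 0) at_top"
  unfolding poly_mult_exp_neg_power4_eq_sum
  by (rule tendsto_null_sum, rule tendsto_mult_right_zero, rule power_mult_exp_neg_power4_tendsto_0)

lemma poly_mult_exp_neg_power4_tendsto_0_at_bot: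
  "((\<lambda>x::real. poly (p::real poly) x * exp (- (x ^ 4))) \<longlongrightarrow> 0) at_bot"
  unfolding filterlim_at_bot_mirror
  using poly_mult_exp_neg_power4_tendsto_0_at_top[of "mirror p"] by simp

lemma ipF_commute: "ipF f g = ipF g f"
  unfolding ipF_def by (simp add: mult_ac)

lemma ipF_add_left: "ipF (f + g) h = ipF f h + ipF g h"
proof -
  have "ipF (f + g) h
      = (\<integral>x. poly f x * poly h x * exp (- (x ^ 4)) + poly g x * poly h x * exp (- (x ^ 4)) \<partial>lborel)"
    unfolding ipF_def by (rule Bochner_Integration.integral_cong) (auto simp: algebra_simps)
  also have "\<dots> = ipF f h + ipF g h"
    unfolding ipF_def by (rule Bochner_Integration.integral_add) auto
  finally show ?thesis .
qed

lemma ipF_smult_left: "ipF (smult r f) h = r * ipF f h"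
  unfolding ipF_def by (simp add: mult.assoc)

lemma ipF_x_mult: "ipF ([:0, 1:] * f) g = ipF f ([:0, 1:] * g)"
  unfolding ipF_def by (simp add: mult_ac)

lemma ipF_mirror: "ipF (mirror f) (mirror g) = ipF f g"
proof -
  let ?h = "\<lambda>x::real. poly f x * poly g x * exp (- (x ^ 4))"
  have "ipF (mirror f) (mirror g) = (\<integral>x. ?h x \<partial>distr lborel borel uminus)"
    unfolding ipF_def by (subst integral_distr) (auto simp: comp_def)
  then show ?thesis
    unfolding lborel_distr_uminus ipF_def .
qed

lemma ipF_pos:
  assumes "p \<noteq> 0"
  shows "0 < ipF p p"
proof -
  let ?h = "\<lambda>x. poly p x * poly p x * exp (- (x ^ 4))"
  have nonneg: "AE x in lborel. 0 \<le> ?h x" by simp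
  have "ipF p p \<noteq> 0"
  proof
    assume "ipF p p = 0"
    then have "AE x in lborel. x \<in> {x. poly p x = 0}"
      using integral_nonneg_eq_0_iff_AE[OF integrable_ipF_integrand nonneg] by (simp add: ipF_def)
    moreover have "AE x in lborel. x \<notin> {x. poly p x = 0}"
      using finite_imp_null_set_lborel[OF poly_roots_finite[OF assms]] by (rule AE_not_in)
    ultimately have "AE x::real in lborel. False"
      by eventually_elim simp
    then show False
      by (simp add: trivial_limit_def[symmetric] ae_filter_eq_bot_iff)
  qed
  moreover have "0 \<le> ipF p p"
    unfolding ipF_def by (rule integral_nonneg_AE[OF nonneg])
  ultimately show ?thesis by simp
qed

text \<open>The integrand is the derivative of \<open>poly h x * exp (-x\<^sup>4)\<close>, which vanishes at \<open>\<plusminus>\<infinity>\<close>.\<close>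
lemma integral_pderiv_freud_weight_eq_0:
  fixes h :: "real poly"
  shows "(\<integral>x. poly (pderiv h - [:0, 0, 0, 4:] * h) x * exp (- (x ^ 4)) \<partial>lborel) = 0"
proof -
  let ?F = "\<lambda>x::real. poly h x * exp (- (x ^ 4))"
  let ?f = "\<lambda>x::real. poly (pderiv h - [:0, 0, 0, 4:] * h) x * exp (- (x ^ 4))"
  have "(LBINT x=-\<infinity>..\<infinity>. ?f x) = 0 - 0"
  proof (rule interval_integral_FTC_integrable)
    fix x :: real
    show "(?F has_vector_derivative ?f x) (at x)"
      unfolding has_real_derivative_iff_has_vector_derivative[symmetric]
      by (auto intro!: derivative_eq_intros simp: algebra_simps power_numeral_reduce)
    show "isCont ?f x" by (auto intro!: continuous_intros)
  next
    show "set_integrable lborel (einterval (- \<infinity>) \<infinity>) ?f"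
      unfolding set_integrable_def
      using integrable_poly_mult_exp_neg_power4[of "pderiv h - [:0, 0, 0, 4:] * h"] by simp
    show "((?F \<circ> real_of_ereal) \<longlongrightarrow> 0) (at_right (- \<infinity>))"
      unfolding ereal_tendsto_simps1 by (rule poly_mult_exp_neg_power4_tendsto_0_at_bot)
    show "((?F \<circ> real_of_ereal) \<longlongrightarrow> 0) (at_left \<infinity>)"
      unfolding ereal_tendsto_simps1 by (rule poly_mult_exp_neg_power4_tendsto_0_at_top)
  qed simp
  then show ?thesis
    by (simp add: interval_lebesgue_integral_def set_lebesgue_integral_def)
qed

lemma ipF_pderiv: "ipF (pderiv f) g + ipF f (pderiv g) = 4 * ipF f ([:0, 0, 0, 1:] * g)"
proof -
  have "ipF (pderiv f) g + ipF f (pderiv g) - 4 * ipF f ([:0, 0, 0, 1:] * g)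
      = (\<integral>x. poly (pderiv f) x * poly g x * exp (- (x ^ 4))
               + poly f x * poly (pderiv g) x * exp (- (x ^ 4))
               - 4 * (poly f x * poly ([:0, 0, 0, 1:] * g) x * exp (- (x ^ 4))) \<partial>lborel)"
    unfolding ipF_def
    by (subst Bochner_Integration.integral_diff)
       (auto simp only: Bochner_Integration.integral_add[OF integrable_ipF_integrand integrable_ipF_integrand]
          integral_mult_right_zero intro!: Bochner_Integration.integrable_add integrable_mult_right)
  also have "\<dots> = (\<integral>x. poly (pderiv (f * g) - [:0, 0, 0, 4:] * (f * g)) x * exp (- (x ^ 4)) \<partial>lborel)"
    by (rule Bochner_Integration.integral_cong) (auto simp: pderiv_mult algebra_simps)
  finally show ?thesis
    using integral_pderiv_freud_weight_eq_0[of "f * g"] by simp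
qed

section \<open>Monic orthogonal polynomials of an even inner product\<close>

function gram_schmidt :: "(real poly \<Rightarrow> real poly \<Rightarrow> real) \<Rightarrow> nat \<Rightarrow> real poly" where
  "gram_schmidt ip n = monom 1 n -
     (\<Sum>j<n. smult (ip (monom 1 n) (gram_schmidt ip j) / ip (gram_schmidt ip j) (gram_schmidt ip j))
                 (gram_schmidt ip j))"
  by auto
termination by (relation "Wellfounded.measure snd") auto

declare gram_schmidt.simps [simp del]

lemma degree_less_if_coeff_eq_0:
  "degree r \<le> m \<Longrightarrow> coeff r m = 0 \<Longrightarrow> r \<noteq> 0 \<Longrightarrow> degree r < m"
  by (metis le_neq_implies_less leading_coeff_0_iff)

locale even_inner_product =
  fixes ip :: "real poly \<Rightarrow> real poly \<Rightarrow> real"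
  assumes commute: "ip f g = ip g f"
    and add_left: "ip (f + g) h = ip f h + ip g h"
    and smult_left: "ip (smult r f) h = r * ip f h"
    and pos: "f \<noteq> 0 \<Longrightarrow> 0 < ip f f"
    and mirror: "ip (mirror f) (mirror g) = ip f g"
begin

lemma smult_right: "ip h (smult r f) = r * ip h f"
  by (simp add: commute[of h] smult_left)

lemma add_right: "ip h (f + g) = ip h f + ip h g"
  by (simp add: commute[of h] add_left)

lemma zero_left [simp]: "ip 0 h = 0"
  using smult_left[of 0 h h] by simp

lemma zero_right [simp]: "ip h 0 = 0"
  using smult_right[of h 0 h] by simp

lemma diff_left: "ip (f - g) h = ip f h - ip g h"
  using add_left[of "f - g" g h] by simp

lemma sum_left: "ip (\<Sum>j\<in>A. F j) h = (\<Sum>j\<in>A. ip (F j) h)"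
  by (induction A rule: infinite_finite_induct) (auto simp: add_left)

lemma nonneg: "0 \<le> ip f f"
  using pos[of f] by (cases "f = 0") auto

abbreviation GS :: "nat \<Rightarrow> real poly" where
  "GS \<equiv> gram_schmidt ip"

lemma gram_schmidt_monic_orthogonal:
  "degree (GS n) = n \<and> lead_coeff (GS n) = 1 \<and> (\<forall>j<n. ip (GS n) (GS j) = 0)"
proof (induction n rule: less_induct)
  case (less n)
  define S where "S = (\<Sum>j<n. smult (ip (monom 1 n) (GS j) / ip (GS j) (GS j)) (GS j))"
  have GS_n: "GS n = monom 1 n - S"
    unfolding S_def by (subst gram_schmidt.simps) simp
  have coeff_S: "coeff S k = 0" if "n \<le> k" for k
    unfolding S_def coeff_sum using less.IH that by (auto intro!: sum.neutral simp: coeff_eq_0)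
  have "coeff (GS n) k = 0" if "n < k" for k
    using coeff_S[of k] that by (simp add: GS_n coeff_monom)
  moreover have "coeff (GS n) n = 1"
    using coeff_S[of n] by (simp add: GS_n)
  ultimately have deg: "degree (GS n) = n"
    by (metis degree_le le_degree le_antisym leI zero_neq_one)
  have norm_pos: "0 < ip (GS j) (GS j)" if "j < n" for j
    using less.IH[OF that] by (intro pos) auto
  have orth: "ip (GS j) (GS i) = 0" if "j < n" "i < n" "j \<noteq> i" for i j
    using less.IH that commute by (metis linorder_neqE_nat)
  have "ip (GS n) (GS i) = 0" if "i < n" for i
  proof -
    have "ip S (GS i) = (\<Sum>j<n. ip (monom 1 n) (GS j) / ip (GS j) (GS j) * ip (GS j) (GS i))"
      unfolding S_def by (simp add: sum_left smult_left)
    also have "\<dots> = ip (monom 1 n) (GS i)"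
      using that orth norm_pos[OF that] by (subst sum.remove[of _ i]) (auto intro!: sum.neutral)
    finally show ?thesis by (simp add: GS_n diff_left)
  qed
  with deg \<open>coeff (GS n) n = 1\<close> show ?case by simp
qed

lemma gram_schmidt_orthogonal_lower:
  "degree q < n \<Longrightarrow> ip (GS n) q = 0"
proof (induction "degree q" arbitrary: q rule: less_induct)
  case less
  show ?case
  proof (cases "q = 0")
    case False
    define d where "d = degree q"
    define r where "r = q - smult (coeff q d) (GS d)"
    have GS_d: "degree (GS d) = d" "lead_coeff (GS d) = 1"
      using gram_schmidt_monic_orthogonal[of d] by auto
    have "degree r \<le> d"
      unfolding r_def d_def using GS_d
      by (intro degree_diff_le order.trans[OF degree_smult_le]) (auto simp: d_def)
    moreover have "coeff r d = 0"
      unfolding r_def using GS_d by simp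
    ultimately have "r = 0 \<or> degree r < degree q"
      using degree_less_if_coeff_eq_0 d_def by blast
    then have "ip (GS n) r = 0"
      using less by auto
    moreover have "ip (GS n) (GS d) = 0"
      using gram_schmidt_monic_orthogonal[of n] less d_def by auto
    moreover have "q = smult (coeff q d) (GS d) + r"
      unfolding r_def by simp
    ultimately show ?thesis
      by (metis add_right smult_right mult_zero_right add_0)
  qed simp
qed

abbreviation OP :: "nat \<Rightarrow> real poly" where
  "OP n \<equiv> monic_OP ip n"

abbreviation OP_norm :: "nat \<Rightarrow> real" where
  "OP_norm n \<equiv> ip (OP n) (OP n)"

lemma monic_orthogonal_unique:
  assumes "degree p = n" "lead_coeff p = 1" "\<forall>q. degree q < n \<longrightarrow> ip p q = 0"
    and "degree p' = n" "lead_coeff p' = 1" "\<forall>q. degree q < n \<longrightarrow> ip p' q = 0"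
  shows "p = p'"
proof (rule ccontr)
  assume "p \<noteq> p'"
  moreover have "degree (p - p') \<le> n" "coeff (p - p') n = 0"
    using assms by (auto intro: degree_diff_le)
  ultimately have "degree (p - p') < n"
    using degree_less_if_coeff_eq_0[of "p - p'" n] by simp
  then have "ip (p - p') (p - p') = 0"
    using assms by (simp add: diff_left)
  with \<open>p \<noteq> p'\<close> pos show False
    by (metis less_irrefl right_minus_eq)
qed

lemma OP_eq_gram_schmidt: "OP n = GS n"
  unfolding monic_OP_def
proof (rule the_equality)
  show "degree (GS n) = n \<and> lead_coeff (GS n) = 1 \<and> (\<forall>q. degree q < n \<longrightarrow> ip (GS n) q = 0)"
    using gram_schmidt_monic_orthogonal gram_schmidt_orthogonal_lower by blast
qed (use monic_orthogonal_unique gram_schmidt_monic_orthogonal gram_schmidt_orthogonal_lower in blast)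

lemma degree_OP [simp]: "degree (OP n) = n"
  and coeff_OP [simp]: "coeff (OP n) n = 1"
  using gram_schmidt_monic_orthogonal[of n] by (auto simp: OP_eq_gram_schmidt)

lemma OP_nonzero [simp]: "OP n \<noteq> 0"
  using coeff_OP[of n] by (metis coeff_0 zero_neq_one)

lemma OP_norm_pos: "0 < OP_norm n"
  by (simp add: pos)

lemma OP_orthogonal_lower: "degree q < n \<Longrightarrow> ip (OP n) q = 0"
  by (simp add: OP_eq_gram_schmidt gram_schmidt_orthogonal_lower)

lemma OP_orthogonal: "i \<noteq> j \<Longrightarrow> ip (OP i) (OP j) = 0"
  by (metis OP_orthogonal_lower commute degree_OP linorder_neqE_nat)

lemma OP_unique:
  "degree p = n \<Longrightarrow> lead_coeff p = 1 \<Longrightarrow> (\<And>q. degree q < n \<Longrightarrow> ip p q = 0) \<Longrightarrow> OP n = p"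
  using monic_orthogonal_unique[of "OP n" n p] OP_orthogonal_lower by simp

lemma OP_orthogonal_if_coeff_eq_0:
  assumes "degree r \<le> m" "coeff r m = 0"
  shows "ip (OP m) r = 0"
  using assms degree_less_if_coeff_eq_0[of r m] OP_orthogonal_lower[of r m] by (cases "r = 0") auto

lemma inner_OP_eq_coeff:
  assumes "degree f \<le> m"
  shows "ip f (OP m) = coeff f m * OP_norm m"
proof -
  define r where "r = f - smult (coeff f m) (OP m)"
  have "degree r \<le> m" "coeff r m = 0"
    unfolding r_def using assms by (auto intro!: degree_diff_le order.trans[OF degree_smult_le])
  then have "ip r (OP m) = 0"
    using OP_orthogonal_if_coeff_eq_0 commute by metis
  moreover have "f = smult (coeff f m) (OP m) + r"
    unfolding r_def by simp
  ultimately show ?thesis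
    by (metis add_left smult_left add_0_right)
qed

lemma eq_0_if_orthogonal_to_OP:
  assumes "degree f \<le> m" "\<And>j. j \<le> m \<Longrightarrow> ip f (OP j) = 0"
  shows "f = 0"
  using assms
proof (induction m arbitrary: f)
  case 0
  then have "lead_coeff f = 0"
    using inner_OP_eq_coeff[of f 0] OP_norm_pos[of 0] by simp
  then show ?case
    by simp
next
  case (Suc m)
  have "coeff f (Suc m) = 0"
    using Suc.prems inner_OP_eq_coeff[of f "Suc m"] OP_norm_pos[of "Suc m"] by simp
  then have "degree f \<le> m"
    using Suc.prems(1) degree_less_if_coeff_eq_0 by fastforce
  then show ?case
    using Suc by simp
qed

lemma OP_norm_minimal:
  assumes "degree p = n" "lead_coeff p = 1"
  shows "OP_norm n \<le> ip p p"
proof -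
  define r where "r = p - OP n"
  have "degree r \<le> n" "coeff r n = 0"
    unfolding r_def using assms by (auto intro: degree_diff_le)
  then have orth: "ip (OP n) r = 0"
    by (rule OP_orthogonal_if_coeff_eq_0)
  have "ip p p = ip (OP n + r) (OP n + r)"
    unfolding r_def by simp
  also have "\<dots> = OP_norm n + ip r r"
    using orth commute[of r "OP n"] by (simp add: add_left add_right)
  finally show ?thesis
    using nonneg[of r] by simp
qed

lemma mirror_OP: "mirror (OP n) = smult ((-1) ^ n) (OP n)"
proof -
  have "OP n = smult ((-1) ^ n) (mirror (OP n))"
  proof (rule OP_unique)
    have "lead_coeff (mirror (OP n)) = (-1) ^ n"
      using lead_coeff_mirror[of "OP n"] by simp
    then show "lead_coeff (smult ((-1) ^ n) (mirror (OP n))) = 1"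
      by (simp flip: power_mult_distrib)
    show "ip (smult ((-1) ^ n) (mirror (OP n))) q = 0" if "degree q < n" for q
      using mirror[of "OP n" "mirror q"] OP_orthogonal_lower[of "mirror q" n] that
      by (simp add: smult_left)
  qed simp
  from arg_cong[OF this, of mirror] show ?thesis
    by simp
qed

lemma inner_eq_0_if_opposite_parity:
  assumes "mirror f = smult s f" "mirror g = smult t g" "s * t = -1"
  shows "ip f g = 0"
proof -
  have "ip f g = ip (mirror f) (mirror g)"
    by (simp add: mirror)
  also have "\<dots> = (s * t) * ip f g"
    using assms(1,2) by (simp add: smult_left smult_right)
  also have "\<dots> = - ip f g"
    using assms(3) by simp
  finally show ?thesis by simp
qed

lemma inner_x_mult_OP_eq_0:
  assumes "mirror g = smult ((-1) ^ n) g"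
  shows "ip ([:0, 1:] * g) (OP n) = 0"
  by (rule inner_eq_0_if_opposite_parity[OF mirror_x_mult[OF assms] mirror_OP])
     (simp flip: power_mult_distrib)

lemma OP_0: "OP 0 = 1"
  by (rule OP_unique) auto

lemma OP_1: "OP 1 = [:0, 1:]"
proof (rule OP_unique)
  fix q :: "real poly"
  assume "degree q < 1"
  then obtain a where "q = [:a:]"
    by (metis degree_eq_zeroE less_one)
  then have "mirror q = smult 1 q"
    by (intro poly_ext) simp
  moreover have "mirror [:0, 1:] = smult (-1) [:0, 1:]"
    by (intro poly_ext) simp
  ultimately show "ip [:0, 1:] q = 0"
    by (intro inner_eq_0_if_opposite_parity) auto
qed auto

end

section \<open>Recurrences and the Freud equation\<close>

interpretation F: even_inner_product ipF
  by unfold_locales (rule ipF_commute ipF_add_left ipF_smult_left ipF_mirror | erule ipF_pos)+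

lemma even_inner_product_ipS:
  assumes "0 \<le> l"
  shows "even_inner_product (ipS l)"
proof
  fix f g h :: "real poly" and r :: real
  show "ipS l f g = ipS l g f"
    by (simp add: ipS_def ipF_commute)
  show "ipS l (f + g) h = ipS l f h + ipS l g h"
    by (simp add: ipS_def ipF_add_left algebra_simps)
  show "ipS l (smult r f) h = r * ipS l f h"
    by (simp add: ipS_def ipF_smult_left algebra_simps)
  show "ipS l (mirror f) (mirror g) = ipS l f g"
    by (simp add: ipS_def ipF_mirror)
  assume "f \<noteq> 0"
  then show "0 < ipS l f f"
    using ipF_pos[of f] assms by (simp add: ipS_def add_pos_nonneg mult.assoc)
qed

lemma ipS_x_mult: "ipS l ([:0, 1:] * f) g = ipF f ([:0, 1:] * g)"
  using ipF_x_mult[of f g] by (simp add: ipS_def)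

lemma ipS_0: "ipS 0 = ipF"
  by (simp add: ipS_def fun_eq_iff)

lemma Q_0: "Q 0 = P"
  by (simp add: fun_eq_iff Q_def P_def ipS_0)

lemma kS_0: "kS 0 = kF"
  by (simp add: fun_eq_iff kS_def kF_def Q_0 ipS_0)

lemma kF_pos: "0 < kF n"
  by (simp add: kF_def P_def F.OP_norm_pos)

lemma kS_pos: "0 \<le> l \<Longrightarrow> 0 < kS l n"
  using even_inner_product.OP_norm_pos[OF even_inner_product_ipS] by (simp add: kS_def Q_def)

lemma kF_le_kS:
  assumes "0 \<le> l"
  shows "kF n \<le> kS l n"
proof -
  interpret S: even_inner_product "ipS l"
    by (rule even_inner_product_ipS[OF assms])
  have "kF n \<le> ipF (Q l n) (Q l n)"
    unfolding kF_def P_def Q_def by (rule F.OP_norm_minimal) simp_all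
  also have "\<dots> \<le> kS l n"
    using assms by (simp add: kS_def ipS_def mult.assoc)
  finally show ?thesis .
qed

lemma c_nonneg: "0 \<le> c n"
  by (simp add: c_def kF_pos less_imp_le)

lemma a_0_eq_c: "a 0 (Suc n) = c (Suc n)"
  by (simp add: a_def c_def kS_0)

text \<open>\<open>x P\<^sub>n\<^sub>+\<^sub>1\<close> vanishes at \<open>0\<close>, so the mass at \<open>0\<close> does not see it and \<open>ipS\<close> reduces
  to \<open>ipF\<close>; parity removes the component along \<open>Q\<^sub>n\<^sub>+\<^sub>1\<close>.\<close>
lemma ipS_x_mult_P_Suc_Q:
  assumes "0 \<le> l" "j \<le> n + 2"
  shows "ipS l ([:0, 1:] * P (Suc n)) (Q l j)
    = (if j = n + 2 then kS l (n + 2) else if j = n then kF (Suc n) else 0)"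
proof -
  interpret S: even_inner_product "ipS l"
    by (rule even_inner_product_ipS[OF assms(1)])
  have Q: "Q l = S.OP" and P: "P = F.OP"
    by (simp_all add: fun_eq_iff Q_def P_def)
  consider "j = n + 2" | "j = n + 1" | "j = n" | "j < n"
    using assms(2) by linarith
  then show ?thesis
  proof cases
    case 1
    then show ?thesis
      using S.inner_OP_eq_coeff[of "[:0, 1:] * P (Suc n)" "n + 2"] by (simp add: Q P kS_def Q_def)
  next
    case 2
    have "ipS l ([:0, 1:] * F.OP (Suc n)) (S.OP (Suc n)) = 0"
      by (rule S.inner_x_mult_OP_eq_0) (simp add: F.mirror_OP)
    with 2 show ?thesis
      by (simp add: Q P)
  next
    case 3
    have "ipS l ([:0, 1:] * P (Suc n)) (Q l n) = ipF ([:0, 1:] * S.OP n) (F.OP (Suc n))"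
      by (simp only: ipS_x_mult F.commute P Q)
    also have "\<dots> = kF (Suc n)"
      by (subst F.inner_OP_eq_coeff) (simp_all add: kF_def P_def degree_mult_le)
    finally show ?thesis
      using 3 by simp
  next
    case 4
    have "ipS l ([:0, 1:] * P (Suc n)) (Q l j) = ipF (F.OP (Suc n)) ([:0, 1:] * S.OP j)"
      by (simp only: ipS_x_mult P Q)
    also have "\<dots> = 0"
      using 4 by (intro F.OP_orthogonal_lower) (simp add: degree_mult_le)
    finally show ?thesis
      using 4 by simp
  qed
qed

lemma x_mult_P_Suc:
  assumes "0 \<le> l"
  shows "[:0, 1:] * P (Suc n) = Q l (n + 2) + smult (a l (Suc n)) (Q l n)"
proof -
  interpret S: even_inner_product "ipS l"
    by (rule even_inner_product_ipS[OF assms])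
  have Q: "Q l = S.OP"
    by (simp add: fun_eq_iff Q_def)
  have "[:0, 1:] * P (Suc n) - Q l (n + 2) - smult (a l (Suc n)) (Q l n) = 0"
  proof (rule S.eq_0_if_orthogonal_to_OP)
    show "degree ([:0, 1:] * P (Suc n) - Q l (n + 2) - smult (a l (Suc n)) (Q l n)) \<le> n + 2"
      unfolding Q P_def
      by (intro degree_diff_le order.trans[OF degree_smult_le]) (auto simp: degree_mult_le)
    fix j
    assume "j \<le> n + 2"
    then show "ipS l ([:0, 1:] * P (Suc n) - Q l (n + 2) - smult (a l (Suc n)) (Q l n)) (S.OP j) = 0"
      using ipS_x_mult_P_Suc_Q[OF assms \<open>j \<le> n + 2\<close>] kS_pos[OF assms, of n]
      by (simp add: Q[symmetric] S.diff_left S.smult_left S.OP_orthogonal[unfolded Q[symmetric]]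
          a_def kS_def)
  qed
  then show ?thesis
    by (simp add: algebra_simps)
qed

lemma x_mult_P: "[:0, 1:] * P n = P (Suc n) + smult (c n) (P (n - 1))"
proof (cases n)
  case 0
  then show ?thesis
    using F.OP_0 F.OP_1 by (simp add: P_def c_def)
next
  case (Suc m)
  then show ?thesis
    using x_mult_P_Suc[of 0 m] by (simp add: Q_0 a_0_eq_c)
qed

lemma ipF_x_mult_P_Suc_self:
  assumes "0 \<le> l"
  shows "ipF ([:0, 1:] * P (Suc n)) ([:0, 1:] * P (Suc n)) = kS l (n + 2) + (a l (Suc n))\<^sup>2 * kS l n"
proof -
  interpret S: even_inner_product "ipS l"
    by (rule even_inner_product_ipS[OF assms])
  have "ipF ([:0, 1:] * P (Suc n)) ([:0, 1:] * P (Suc n))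
      = ipS l ([:0, 1:] * P (Suc n)) ([:0, 1:] * P (Suc n))"
    by (simp add: ipS_def)
  also have "\<dots> = ipS l (Q l (n + 2) + smult (a l (Suc n)) (Q l n))
                       (Q l (n + 2) + smult (a l (Suc n)) (Q l n))"
    by (simp only: x_mult_P_Suc[OF assms])
  also have "\<dots> = kS l (n + 2) + (a l (Suc n))\<^sup>2 * kS l n"
    using S.OP_orthogonal[of "n + 2" n] S.OP_orthogonal[of n "n + 2"]
    by (simp add: S.add_left S.add_right S.smult_left S.smult_right kS_def Q_def power2_eq_square)
  finally show ?thesis .
qed

text \<open>Both sides are the squared Freud norm of \<open>x P\<^sub>n\<^sub>+\<^sub>1\<close>.\<close>
lemma kS_kF_identity:
  assumes "0 \<le> l"
  shows "kS l (n + 2) + (a l (Suc n))\<^sup>2 * kS l n = kF (n + 2) + (c (Suc n))\<^sup>2 * kF n"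
  using ipF_x_mult_P_Suc_self[OF assms, of n] ipF_x_mult_P_Suc_self[of 0 n] by (simp add: kS_0 a_0_eq_c)

lemma c_a_identity:
  assumes "0 \<le> l" "1 \<le> n"
  shows "c (n + 2) * c (n + 1) / a l (n + 2) + a l n = c (n + 1) + c n"
proof -
  obtain m where n: "n = Suc m"
    using assms(2) by (cases n) auto
  have pos: "0 < kF m" "0 < kF (m + 1)" "0 < kF (m + 2)" "0 < kF (Suc (Suc (Suc m)))" "0 < kS l m" "0 < kS l (m + 2)"
    using kF_pos kS_pos[OF assms(1)] by auto
  have "kS l (m + 2) + (kF (m + 1))\<^sup>2 / kS l m = kF (m + 2) + (kF (m + 1))\<^sup>2 / kF m"
    using kS_kF_identity[OF assms(1), of m] pos by (simp add: a_def c_def power2_eq_square)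
  then have "(kS l (m + 2) + (kF (m + 1))\<^sup>2 / kS l m) / kF (m + 1)
      = (kF (m + 2) + (kF (m + 1))\<^sup>2 / kF m) / kF (m + 1)"
    by simp
  then have "kS l (m + 2) / kF (m + 1) + kF (m + 1) / kS l m = kF (m + 2) / kF (m + 1) + kF (m + 1) / kF m"
    using pos by (simp add: add_divide_distrib power2_eq_square)
  moreover have "c (n + 2) * c (n + 1) / a l (n + 2) = kS l (m + 2) / kF (m + 1)"
    using pos unfolding n by (simp add: a_def c_def)
  ultimately show ?thesis
    unfolding n by (simp add: a_def c_def)
qed

lemma a_mult_b:
  assumes "0 \<le> l" "1 \<le> n"
  shows "a l (n + 1) * b l n = c (n + 1) * c n"
  using assms kS_pos[OF assms(1), of n] kF_pos[of n] by (simp add: a_def b_def c_def)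

lemma ipF_x_mult_P_Suc_x2_mult_P:
  "4 * ipF ([:0, 1:] * P (Suc n)) ([:0, 1:] * ([:0, 1:] * P n)) = real (Suc n) * kF n"
proof -
  have "real (Suc n) * kF n = ipF (pderiv (P (Suc n))) (P n) + ipF (P (Suc n)) (pderiv (P n))"
    using F.inner_OP_eq_coeff[of "pderiv (P (Suc n))" n] F.OP_orthogonal_lower[of "pderiv (P n)" "Suc n"]
    by (simp add: P_def kF_def coeff_pderiv degree_pderiv)
  then show ?thesis
    using ipF_x_mult[of "P (Suc n)" "[:0, 1:] * ([:0, 1:] * P n)"] by (simp add: ipF_pderiv)
qed

lemma freud_equation: "real (Suc n) = 4 * c (Suc n) * (c n + c (Suc n) + c (n + 2))"
proof -
  have "real (Suc n) * kF n = 4 * ipF ([:0, 1:] * P (Suc n)) ([:0, 1:] * ([:0, 1:] * P n))"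
    by (rule ipF_x_mult_P_Suc_x2_mult_P[symmetric])
  also have "\<dots> = 4 * (ipF ([:0, 1:] * P (Suc n)) ([:0, 1:] * P (Suc n))
                     + c n * ipF ([:0, 1:] * P (Suc n)) ([:0, 1:] * P (n - 1)))"
    by (simp only: x_mult_P[of n] distrib_left mult_smult_right ipF_x_mult F.add_right F.smult_right)
  also have "c n * ipF ([:0, 1:] * P (Suc n)) ([:0, 1:] * P (n - 1)) = c n * kF (Suc n)"
  proof (cases n)
    case (Suc m)
    have "ipF ([:0, 1:] * P (Suc n)) ([:0, 1:] * P (n - 1))
        = ipF ([:0, 1:] * ([:0, 1:] * F.OP m)) (F.OP (Suc n))"
      by (subst ipF_x_mult, subst F.commute) (simp add: Suc P_def)
    also have "\<dots> = kF (Suc n)"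
      using Suc by (subst F.inner_OP_eq_coeff) (simp_all add: kF_def P_def degree_mult_le)
    finally show ?thesis by simp
  qed (simp add: c_def)
  finally have "real (Suc n) * kF n = 4 * (kF (n + 2) + (c (Suc n))\<^sup>2 * kF n + c n * kF (Suc n))"
    using ipF_x_mult_P_Suc_self[of 0 n] by (simp add: kS_0 a_0_eq_c)
  moreover have "kF (Suc n) = c (Suc n) * kF n" "kF (n + 2) = c (n + 2) * c (Suc n) * kF n"
    using kF_pos[of n] kF_pos[of "Suc n"] by (simp_all add: c_def)
  ultimately have "real (Suc n) * kF n = (4 * c (Suc n) * (c n + c (Suc n) + c (n + 2))) * kF n"
    by (simp add: algebra_simps power2_eq_square)
  then show ?thesis
    using kF_pos[of n] by simp
qed

section \<open>Limits forced by nonlinear recurrences\<close>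

lemma frequently_sequentially_seg:
  "frequently (\<lambda>n. p (n + k)) sequentially \<longleftrightarrow> frequently p sequentially"
  unfolding frequently_def using eventually_sequentially_seg[of "\<lambda>n. \<not> p n" k] by simp

lemma real_limsup_liminfE:
  fixes w :: "nat \<Rightarrow> real"
  assumes "eventually (\<lambda>n. \<bar>w n\<bar> \<le> B) sequentially"
  obtains L1 L2
  where "\<And>e. 0 < e \<Longrightarrow> frequently (\<lambda>n. L1 - e < w n) sequentially"
    and "\<And>e. 0 < e \<Longrightarrow> frequently (\<lambda>n. w n < L2 + e) sequentially"
    and "\<And>e. 0 < e \<Longrightarrow> eventually (\<lambda>n. L2 - e < w n \<and> w n < L1 + e) sequentially"
    and "L2 \<le> L1"
proof -
  define Ls where "Ls = limsup (\<lambda>n. ereal (w n))"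
  define Li where "Li = liminf (\<lambda>n. ereal (w n))"
  have "Ls \<le> ereal B" "ereal (- B) \<le> Li"
    unfolding Ls_def Li_def using assms
    by (auto intro!: Limsup_bounded Liminf_bounded elim!: eventually_mono)
  moreover have "Li \<le> Ls"
    unfolding Li_def Ls_def by (simp add: Liminf_le_Limsup)
  ultimately obtain L1 L2 where L1: "Ls = ereal L1" and L2: "Li = ereal L2"
    by (cases Ls; cases Li) auto
  show thesis
  proof
    show "L2 \<le> L1"
      using \<open>Li \<le> Ls\<close> L1 L2 by simp
    fix e :: real
    assume "0 < e"
    have "ereal (L2 - e) < Li" "Ls < ereal (L1 + e)"
      using L1 L2 \<open>0 < e\<close> by simp_all
    have "eventually (\<lambda>n. ereal (L2 - e) < ereal (w n)) sequentially"
      using \<open>ereal (L2 - e) < Li\<close> unfolding Li_def by (rule less_LiminfD)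
    moreover have "eventually (\<lambda>n. ereal (w n) < ereal (L1 + e)) sequentially"
      using \<open>Ls < ereal (L1 + e)\<close> unfolding Ls_def by (rule Limsup_lessD)
    ultimately show "eventually (\<lambda>n. L2 - e < w n \<and> w n < L1 + e) sequentially"
      by (simp add: eventually_conj_iff)
    show "frequently (\<lambda>n. L1 - e < w n) sequentially"
    proof (rule ccontr)
      assume "\<not> ?thesis"
      then have "Ls \<le> ereal (L1 - e)"
        unfolding Ls_def not_frequently by (auto intro!: Limsup_bounded elim!: eventually_mono)
      with L1 \<open>0 < e\<close> show False by simp
    qed
    show "frequently (\<lambda>n. w n < L2 + e) sequentially"
    proof (rule ccontr)
      assume "\<not> ?thesis"
      then have "ereal (L2 + e) \<le> Li"
        unfolding Li_def not_frequently by (auto intro!: Liminf_bounded elim!: eventually_mono)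
      with L2 \<open>0 < e\<close> show False by simp
    qed
  qed
qed

lemma freud_form_mono:
  fixes x y z r s x' y' z' r' s' :: real
  assumes "0 \<le> x" "x \<le> x'" "0 \<le> y" "y \<le> y'" "0 \<le> z" "z \<le> z'" "0 \<le> r" "r \<le> r'" "0 \<le> s" "s \<le> s'"
  shows "4 * y * (r * x + y + s * z) \<le> 4 * y' * (r' * x' + y' + s' * z')"
  using assms by (intro mult_mono add_mono) (auto intro: order_trans)

text \<open>The Freud equation divided by \<open>n\<close>, for \<open>w n = c n / \<surd>n\<close>: the weights \<open>r\<close> and \<open>s\<close>
  absorb the ratios \<open>\<surd>n / \<surd>(n+1)\<close> and \<open>\<surd>(n+2) / \<surd>(n+1)\<close>.\<close>
context
  fixes w r s :: "nat \<Rightarrow> real"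
  assumes w_nonneg: "\<And>n. 0 \<le> w n"
    and r: "r \<longlonglongrightarrow> 1" and s: "s \<longlonglongrightarrow> 1"
    and freud: "eventually (\<lambda>n. 4 * w (n + 1) * (r n * w n + w (n + 1) + s n * w (n + 2)) = 1) sequentially"
begin

lemma freud_type_bounded: "eventually (\<lambda>n. \<bar>w n\<bar> \<le> 1/2) sequentially"
proof -
  have "eventually (\<lambda>n. 0 < r n \<and> 0 < s n) sequentially"
    using order_tendstoD(1)[OF r, of 0] order_tendstoD(1)[OF s, of 0] by (simp add: eventually_conj_iff)
  then have "eventually (\<lambda>n. \<bar>w (Suc n)\<bar> \<le> 1/2) sequentially"
    using freud
  proof eventually_elim
    case (elim n)
    then have "(2 * w (Suc n))\<^sup>2 \<le> 1\<^sup>2"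
      using freud_form_mono[of 0 "w n" "w (n + 1)" "w (n + 1)" 0 "w (n + 2)" "r n" "r n" "s n" "s n"] w_nonneg
      by (simp add: power2_eq_square)
    then show ?case
      using power2_le_imp_le[of "2 * w (Suc n)" 1] w_nonneg[of "Suc n"] by simp
  qed
  then show ?thesis
    by (rule eventually_sequentially_Suc[of "\<lambda>n. \<bar>w n\<bar> \<le> 1/2", THEN iffD1])
qed

lemma freud_type_limsup_bound:
  assumes "0 \<le> L2" "L2 \<le> L1"
    and liminf: "\<And>e. 0 < e \<Longrightarrow> eventually (\<lambda>n. L2 - e < w n) sequentially"
    and limsup: "\<And>e. 0 < e \<Longrightarrow> frequently (\<lambda>n. L1 - e < w n) sequentially"
  shows "4 * L1 * (L2 + L1 + L2) \<le> 1"
proof -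
  define m where "m L e = max 0 (L - e)" for L e :: real
  have bound: "4 * m L1 e * ((1 - e) * m L2 e + m L1 e + (1 - e) * m L2 e) \<le> 1"
    if e: "0 < e" "e < 1" for e
  proof -
    have shifted: "eventually (\<lambda>n. L2 - e < w (n + 2)) sequentially"
      using liminf[OF e(1)] by (simp only: eventually_sequentially_seg[of "\<lambda>n. L2 - e < w n" 2])
    have "frequently (\<lambda>n. L1 - e < w (n + 1)) sequentially"
      using limsup[OF e(1)] by (simp only: frequently_sequentially_seg[of "\<lambda>n. L1 - e < w n"])
    moreover have "eventually (\<lambda>n. L2 - e < w n \<and> L2 - e < w (n + 2) \<and> 1 - e < r n \<and> 1 - e < s n
        \<and> 4 * w (n + 1) * (r n * w n + w (n + 1) + s n * w (n + 2)) = 1) sequentially"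
      using liminf[OF e(1)] shifted freud order_tendstoD(1)[OF r, of "1 - e"] order_tendstoD(1)[OF s, of "1 - e"] e
      by (simp add: eventually_conj_iff)
    ultimately obtain n where "L2 - e < w n" "L2 - e < w (n + 2)" "L1 - e < w (n + 1)"
      "1 - e < r n" "1 - e < s n" "4 * w (n + 1) * (r n * w n + w (n + 1) + s n * w (n + 2)) = 1"
      by (rule frequentlyE[OF frequently_eventually_frequently]) auto
    then show ?thesis
      using freud_form_mono[of "m L2 e" "w n" "m L1 e" "w (n + 1)" "m L2 e" "w (n + 2)"
          "1 - e" "r n" "1 - e" "s n"] w_nonneg e
      by (simp add: m_def)
  qed
  have "((\<lambda>e. 4 * m L1 e * ((1 - e) * m L2 e + m L1 e + (1 - e) * m L2 e))
          \<longlongrightarrow> 4 * m L1 0 * ((1 - 0) * m L2 0 + m L1 0 + (1 - 0) * m L2 0)) (at_right 0)"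
    unfolding m_def by (intro tendsto_intros)
  then have "((\<lambda>e. 4 * m L1 e * ((1 - e) * m L2 e + m L1 e + (1 - e) * m L2 e))
          \<longlongrightarrow> 4 * L1 * (L2 + L1 + L2)) (at_right 0)"
    using assms(1,2) by (simp add: m_def)
  moreover have "eventually (\<lambda>e. 4 * m L1 e * ((1 - e) * m L2 e + m L1 e + (1 - e) * m L2 e) \<le> 1)
      (at_right (0::real))"
    using eventually_at_right_real[OF zero_less_one] by (rule eventually_mono) (use bound in auto)
  ultimately show ?thesis
    using tendsto_upperbound trivial_limit_at_right_real by blast
qed

lemma freud_type_liminf_bound:
  assumes "0 \<le> L2" "L2 \<le> L1"
    and limsup: "\<And>e. 0 < e \<Longrightarrow> eventually (\<lambda>n. w n < L1 + e) sequentially"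
    and liminf: "\<And>e. 0 < e \<Longrightarrow> frequently (\<lambda>n. w n < L2 + e) sequentially"
  shows "1 \<le> 4 * L2 * (L1 + L2 + L1)"
proof -
  have bound: "1 \<le> 4 * (L2 + e) * ((1 + e) * (L1 + e) + (L2 + e) + (1 + e) * (L1 + e))"
    if e: "0 < e" "e < 1" for e
  proof -
    have shifted: "eventually (\<lambda>n. w (n + 2) < L1 + e) sequentially"
      using limsup[OF e(1)] by (simp only: eventually_sequentially_seg[of "\<lambda>n. w n < L1 + e" 2])
    have "frequently (\<lambda>n. w (n + 1) < L2 + e) sequentially"
      using liminf[OF e(1)] by (simp only: frequently_sequentially_seg[of "\<lambda>n. w n < L2 + e"])
    moreover have "eventually (\<lambda>n. w n < L1 + e \<and> w (n + 2) < L1 + e \<and> 1 - e < r n \<and> r n < 1 + e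
        \<and> 1 - e < s n \<and> s n < 1 + e
        \<and> 4 * w (n + 1) * (r n * w n + w (n + 1) + s n * w (n + 2)) = 1) sequentially"
      using limsup[OF e(1)] shifted freud e
        order_tendstoD[OF r, of "1 - e"] order_tendstoD[OF r, of "1 + e"]
        order_tendstoD[OF s, of "1 - e"] order_tendstoD[OF s, of "1 + e"]
      by (simp add: eventually_conj_iff)
    ultimately obtain n where "w n < L1 + e" "w (n + 2) < L1 + e" "w (n + 1) < L2 + e"
      "1 - e < r n" "r n < 1 + e" "1 - e < s n" "s n < 1 + e"
      "4 * w (n + 1) * (r n * w n + w (n + 1) + s n * w (n + 2)) = 1"
      by (rule frequentlyE[OF frequently_eventually_frequently]) auto
    then show ?thesis
      using freud_form_mono[of "w n" "L1 + e" "w (n + 1)" "L2 + e" "w (n + 2)" "L1 + e"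
          "r n" "1 + e" "s n" "1 + e"] w_nonneg e
      by simp
  qed
  have "((\<lambda>e. 4 * (L2 + e) * ((1 + e) * (L1 + e) + (L2 + e) + (1 + e) * (L1 + e)))
          \<longlongrightarrow> 4 * (L2 + 0) * ((1 + 0) * (L1 + 0) + (L2 + 0) + (1 + 0) * (L1 + 0))) (at_right 0)"
    by (intro tendsto_intros)
  moreover have "eventually (\<lambda>e. 1 \<le> 4 * (L2 + e) * ((1 + e) * (L1 + e) + (L2 + e) + (1 + e) * (L1 + e)))
      (at_right (0::real))"
    using eventually_at_right_real[OF zero_less_one] by (rule eventually_mono) (use bound in auto)
  ultimately show ?thesis
    using tendsto_lowerbound trivial_limit_at_right_real by fastforce
qed

lemma freud_type_limit: "w \<longlonglongrightarrow> 1 / (2 * sqrt 3)"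
proof -
  obtain L1 L2
    where limsup: "\<And>e. 0 < e \<Longrightarrow> frequently (\<lambda>n. L1 - e < w n) sequentially"
      and liminf: "\<And>e. 0 < e \<Longrightarrow> frequently (\<lambda>n. w n < L2 + e) sequentially"
      and ev: "\<And>e. 0 < e \<Longrightarrow> eventually (\<lambda>n. L2 - e < w n \<and> w n < L1 + e) sequentially"
      and "L2 \<le> L1"
    by (rule real_limsup_liminfE[OF freud_type_bounded], rule that)
  have "0 \<le> L2"
  proof (rule ccontr)
    assume "\<not> 0 \<le> L2"
    then have "frequently (\<lambda>n. w n < 0) sequentially"
      using liminf[of "- L2"] by simp
    then show False
      using w_nonneg by (simp add: frequently_def not_less)
  qed
  have ev_lower: "eventually (\<lambda>n. L2 - e < w n) sequentially"
    and ev_upper: "eventually (\<lambda>n. w n < L1 + e) sequentially" if "0 < e" for e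
    using ev[OF that] by (auto elim: eventually_mono)
  have upper: "4 * L1 * (L2 + L1 + L2) \<le> 1"
    by (rule freud_type_limsup_bound[OF \<open>0 \<le> L2\<close> \<open>L2 \<le> L1\<close> ev_lower limsup])
  have lower: "1 \<le> 4 * L2 * (L1 + L2 + L1)"
    by (rule freud_type_liminf_bound[OF \<open>0 \<le> L2\<close> \<open>L2 \<le> L1\<close> ev_upper liminf])
  have "L1\<^sup>2 \<le> L2\<^sup>2"
    using upper lower by (simp add: power2_eq_square algebra_simps)
  then have "L1 = L2"
    using \<open>0 \<le> L2\<close> \<open>L2 \<le> L1\<close> power2_le_imp_le[of L1 L2] by simp
  then have "(2 * sqrt 3 * L1)\<^sup>2 = 1\<^sup>2"
    using upper lower by (simp add: power2_eq_square algebra_simps)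
  then have "L1 = 1 / (2 * sqrt 3)"
    using \<open>0 \<le> L2\<close> \<open>L1 = L2\<close> by (subst (asm) power2_eq_iff_nonneg) (auto simp: field_simps)
  show ?thesis
  proof (rule order_tendstoI)
    fix y
    assume "y < 1 / (2 * sqrt 3)"
    then show "eventually (\<lambda>n. y < w n) sequentially"
      using ev[of "L2 - y"] \<open>L1 = L2\<close> \<open>L1 = 1 / (2 * sqrt 3)\<close> by (auto elim: eventually_mono)
  next
    fix y
    assume "1 / (2 * sqrt 3) < y"
    then show "eventually (\<lambda>n. w n < y) sequentially"
      using ev[of "y - L1"] \<open>L1 = 1 / (2 * sqrt 3)\<close> by (auto elim: eventually_mono)
  qed
qed

end

context
  fixes d s :: "nat \<Rightarrow> real"
  assumes d_nonneg: "\<And>n. 0 \<le> d n" and s: "s \<longlonglongrightarrow> 1"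
    and rec: "eventually (\<lambda>n. d (n + 2) = s n * d n / (1 + d n)) sequentially"
begin

lemma ratio_recurrence_bounded: "eventually (\<lambda>n. \<bar>d n\<bar> \<le> 2) sequentially"
proof -
  have "eventually (\<lambda>n. 0 < s n \<and> s n < 2) sequentially"
    using order_tendstoD(1)[OF s, of 0] order_tendstoD(2)[OF s, of 2] by (simp add: eventually_conj_iff)
  then have "eventually (\<lambda>n. \<bar>d (n + 2)\<bar> \<le> 2) sequentially"
    using rec
  proof eventually_elim
    case (elim n)
    have "s n * (d n / (1 + d n)) \<le> s n * 1"
      using elim d_nonneg[of n] by (intro mult_left_mono) auto
    with elim d_nonneg[of "n + 2"] show ?case
      by (simp only: abs_of_nonneg) simp
  qed
  then show ?thesis
    by (simp only: eventually_sequentially_seg[of "\<lambda>n. \<bar>d n\<bar> \<le> 2" 2])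
qed

lemma ratio_recurrence_limsup_eq_0:
  assumes limsup: "\<And>e. 0 < e \<Longrightarrow> frequently (\<lambda>n. L - e < d n) sequentially"
    and ev_upper: "\<And>e. 0 < e \<Longrightarrow> eventually (\<lambda>n. d n < L + e) sequentially"
  shows "L = 0"
proof -
  have "0 \<le> L"
  proof (rule ccontr)
    assume "\<not> 0 \<le> L"
    then have "eventually (\<lambda>n. d n < 0) sequentially"
      using ev_upper[of "- L"] by simp
    then show False
      using d_nonneg by (simp add: eventually_sequentially) (meson leD le_refl)
  qed
  have frac_mono: "t / (1 + t) \<le> u / (1 + u)" if "0 \<le> t" "t \<le> u" for t u :: real
    using that by (simp add: field_simps)
  have bound: "L - e \<le> (1 + e) * ((L + e) / (1 + (L + e)))" if e: "0 < e" "e < 1" for e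
  proof -
    have "frequently (\<lambda>n. L - e < d (n + 2)) sequentially"
      using limsup[OF e(1)] by (simp only: frequently_sequentially_seg[of "\<lambda>n. L - e < d n"])
    moreover have "eventually (\<lambda>n. d n < L + e \<and> 0 < s n \<and> s n < 1 + e
        \<and> d (n + 2) = s n * d n / (1 + d n)) sequentially"
      using ev_upper[OF e(1)] order_tendstoD(1)[OF s, of 0] order_tendstoD(2)[OF s, of "1 + e"] rec e
      by (simp add: eventually_conj_iff)
    ultimately obtain n where "L - e < d (n + 2)" "d n < L + e" "0 < s n" "s n < 1 + e"
      "d (n + 2) = s n * d n / (1 + d n)"
      by (rule frequentlyE[OF frequently_eventually_frequently]) auto
    moreover have "s n * (d n / (1 + d n)) \<le> (1 + e) * ((L + e) / (1 + (L + e)))"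
      using calculation d_nonneg[of n] frac_mono[of "d n" "L + e"]
      by (intro mult_mono) (auto simp: less_imp_le)
    ultimately show ?thesis
      by simp
  qed
  have "((\<lambda>e. (1 + e) * ((L + e) / (1 + (L + e))) - (L - e))
          \<longlongrightarrow> (1 + 0) * ((L + 0) / (1 + (L + 0))) - (L - 0)) (at_right 0)"
    using \<open>0 \<le> L\<close> by (intro tendsto_intros) auto
  moreover have "eventually (\<lambda>e. 0 \<le> (1 + e) * ((L + e) / (1 + (L + e))) - (L - e)) (at_right (0::real))"
    using eventually_at_right_real[OF zero_less_one] by (rule eventually_mono) (use bound in auto)
  ultimately have "L \<le> L / (1 + L)"
    using tendsto_lowerbound trivial_limit_at_right_real by fastforce
  with \<open>0 \<le> L\<close> show "L = 0"
    by (simp add: field_simps) (metis mult_eq_0_iff mult_nonneg_nonneg order_antisym)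
qed

lemma ratio_recurrence_tendsto_0: "d \<longlonglongrightarrow> 0"
proof -
  obtain L1 L2
    where limsup: "\<And>e. 0 < e \<Longrightarrow> frequently (\<lambda>n. L1 - e < d n) sequentially"
      and "\<And>e. 0 < e \<Longrightarrow> frequently (\<lambda>n. d n < L2 + e) sequentially"
      and ev: "\<And>e. 0 < e \<Longrightarrow> eventually (\<lambda>n. L2 - e < d n \<and> d n < L1 + e) sequentially"
      and "L2 \<le> L1"
    by (rule real_limsup_liminfE[OF ratio_recurrence_bounded], rule that)
  have ev_upper: "eventually (\<lambda>n. d n < L1 + e) sequentially" if "0 < e" for e
    using ev[OF that] by (auto elim: eventually_mono)
  have "L1 = 0"
    by (rule ratio_recurrence_limsup_eq_0[OF limsup ev_upper])
  show ?thesis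
  proof (rule order_tendstoI)
    fix y :: real
    assume "y < 0"
    then show "eventually (\<lambda>n. y < d n) sequentially"
      using d_nonneg less_le_trans by (intro always_eventually) blast
  next
    fix y :: real
    assume "0 < y"
    then show "eventually (\<lambda>n. d n < y) sequentially"
      using ev_upper[of y] \<open>L1 = 0\<close> by simp
  qed
qed

end

section \<open>Asymptotics\<close>

lemma c_over_sqrt_tendsto: "(\<lambda>n. c n / sqrt (real n)) \<longlonglongrightarrow> 1 / (2 * sqrt 3)"
proof (rule freud_type_limit)
  show "(\<lambda>n. sqrt (real n) / sqrt (real (n + 1))) \<longlonglongrightarrow> 1"
    by real_asymp
  show "(\<lambda>n. sqrt (real (n + 2)) / sqrt (real (n + 1))) \<longlonglongrightarrow> 1"
    by real_asymp
  show "0 \<le> c n / sqrt (real n)" for n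
    by (simp add: c_nonneg)
  show "eventually (\<lambda>n. 4 * (c (n + 1) / sqrt (real (n + 1)))
      * (sqrt (real n) / sqrt (real (n + 1)) * (c n / sqrt (real n)) + c (n + 1) / sqrt (real (n + 1))
         + sqrt (real (n + 2)) / sqrt (real (n + 1)) * (c (n + 2) / sqrt (real (n + 2)))) = 1) sequentially"
  proof (intro always_eventually allI)
    fix n
    have "sqrt (real n) / sqrt (real (n + 1)) * (c n / sqrt (real n)) = c n / sqrt (real (n + 1))"
      by (cases n) (simp_all add: c_def)
    moreover have "sqrt (real (n + 2)) / sqrt (real (n + 1)) * (c (n + 2) / sqrt (real (n + 2)))
        = c (n + 2) / sqrt (real (n + 1))"
      by simp
    ultimately have "4 * (c (n + 1) / sqrt (real (n + 1)))
      * (sqrt (real n) / sqrt (real (n + 1)) * (c n / sqrt (real n)) + c (n + 1) / sqrt (real (n + 1))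
         + sqrt (real (n + 2)) / sqrt (real (n + 1)) * (c (n + 2) / sqrt (real (n + 2))))
      = 4 * c (Suc n) * (c n + c (Suc n) + c (n + 2)) / (sqrt (real (n + 1)) * sqrt (real (n + 1)))"
      by (simp add: field_simps del: real_sqrt_mult_self)
    also have "\<dots> = real (Suc n) / (sqrt (real (n + 1)) * sqrt (real (n + 1)))"
      by (simp only: freud_equation[of n, symmetric])
    also have "\<dots> = 1"
      by simp
    finally show "4 * (c (n + 1) / sqrt (real (n + 1)))
      * (sqrt (real n) / sqrt (real (n + 1)) * (c n / sqrt (real n)) + c (n + 1) / sqrt (real (n + 1))
         + sqrt (real (n + 2)) / sqrt (real (n + 1)) * (c (n + 2) / sqrt (real (n + 2)))) = 1" .
  qed
qed

lemma kS_over_kF_tendsto: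
  assumes "0 \<le> l"
  shows "(\<lambda>n. kS l n / kF n) \<longlonglongrightarrow> 1"
proof -
  define d where "d n = kS l n / kF n - 1" for n
  have "d \<longlonglongrightarrow> 0"
  proof (rule ratio_recurrence_tendsto_0)
    show "0 \<le> d n" for n
      using kF_le_kS[OF assms, of n] kF_pos[of n] by (simp add: d_def)
    have "(\<lambda>n. sqrt (real (n + 1)) / sqrt (real (n + 2))) \<longlonglongrightarrow> 1"
      by real_asymp
    then have "(\<lambda>n. (c (n + 1) / sqrt (real (n + 1))) / (c (n + 2) / sqrt (real (n + 2)))
             * (sqrt (real (n + 1)) / sqrt (real (n + 2))))
          \<longlonglongrightarrow> (1 / (2 * sqrt 3)) / (1 / (2 * sqrt 3)) * 1"
      by (intro tendsto_mult tendsto_divide LIMSEQ_ignore_initial_segment[OF c_over_sqrt_tendsto]) simp_all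
    then show "(\<lambda>n. c (n + 1) / c (n + 2)) \<longlonglongrightarrow> 1"
      by simp
    show "eventually (\<lambda>n. d (n + 2) = c (n + 1) / c (n + 2) * d n / (1 + d n)) sequentially"
    proof (intro always_eventually allI)
      fix n
      have pos: "0 < kF n" "0 < kF (n + 1)" "0 < kF (n + 2)" "0 < kS l n"
        using kF_pos kS_pos[OF assms] by auto
      have "d (n + 2) = (kS l (n + 2) - kF (n + 2)) / kF (n + 2)"
        using pos by (simp add: d_def diff_divide_distrib)
      also have "kS l (n + 2) - kF (n + 2) = (c (Suc n))\<^sup>2 * kF n - (a l (Suc n))\<^sup>2 * kS l n"
        using kS_kF_identity[OF assms, of n] by simp
      also have "\<dots> = (kF (n + 1))\<^sup>2 * (kS l n - kF n) / (kF n * kS l n)"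
        using pos by (simp add: c_def a_def field_simps power2_eq_square)
      also have "\<dots> / kF (n + 2) = c (n + 1) / c (n + 2) * d n / (1 + d n)"
        using pos by (simp add: d_def c_def field_simps power2_eq_square)
      finally show "d (n + 2) = c (n + 1) / c (n + 2) * d n / (1 + d n)" .
    qed
  qed
  then show ?thesis
    using tendsto_add[OF _ tendsto_const, of d 0 sequentially 1] by (simp add: d_def)
qed

lemma a_over_sqrt_tendsto:
  assumes "0 \<le> l"
  shows "(\<lambda>n. a l n / sqrt (real n)) \<longlonglongrightarrow> 1 / (2 * sqrt 3)"
proof (rule LIMSEQ_imp_Suc)
  have "(\<lambda>n. (c (Suc n) / sqrt (real (Suc n))) / (kS l n / kF n)) \<longlonglongrightarrow> (1 / (2 * sqrt 3)) / 1"
    by (intro tendsto_divide LIMSEQ_Suc[OF c_over_sqrt_tendsto] kS_over_kF_tendsto[OF assms]) simp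
  moreover have "(c (Suc n) / sqrt (real (Suc n))) / (kS l n / kF n) = a l (Suc n) / sqrt (real (Suc n))" for n
    using kF_pos[of n] by (simp add: a_def c_def)
  ultimately show "(\<lambda>n. a l (Suc n) / sqrt (real (Suc n))) \<longlonglongrightarrow> 1 / (2 * sqrt 3)"
    by simp
qed

lemma b_over_sqrt_tendsto:
  assumes "0 \<le> l"
  shows "(\<lambda>n. b l n / sqrt (real n)) \<longlonglongrightarrow> 1 / (2 * sqrt 3)"
proof (rule LIMSEQ_imp_Suc)
  have "(\<lambda>n. kS l (Suc n) / kF (Suc n) * (c (Suc n) / sqrt (real (Suc n)))) \<longlonglongrightarrow> 1 * (1 / (2 * sqrt 3))"
    by (intro tendsto_mult LIMSEQ_Suc c_over_sqrt_tendsto kS_over_kF_tendsto[OF assms])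
  moreover have "kS l (Suc n) / kF (Suc n) * (c (Suc n) / sqrt (real (Suc n))) = b l (Suc n) / sqrt (real (Suc n))" for n
    using kF_pos[of "Suc n"] by (simp add: b_def c_def)
  ultimately show "(\<lambda>n. b l (Suc n) / sqrt (real (Suc n))) \<longlonglongrightarrow> 1 / (2 * sqrt 3)"
    by simp
qed

theorem mainTheorem3:
  fixes l1 :: real
  assumes "l1 \<ge> 0"
  shows "(\<forall>n\<ge>1. c (n + 2) * c (n + 1) / a l1 (n + 2) + a l1 n = c (n + 1) + c n)
       \<and> (\<forall>n\<ge>1. a l1 (n + 1) * b l1 n = c (n + 1) * c n)
       \<and> ((\<lambda>n. a l1 n / sqrt (real n)) \<longlonglongrightarrow> 1 / (2 * sqrt 3))
       \<and> ((\<lambda>n. b l1 n / sqrt (real n)) \<longlonglongrightarrow> 1 / (2 * sqrt 3))"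
  using c_a_identity[OF assms] a_mult_b[OF assms] a_over_sqrt_tendsto[OF assms] b_over_sqrt_tendsto[OF assms]
  by blast

end
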